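(* Let $a=(a_1,\ldots,a_n)$ be a vector of positive integers and $d$ a positive integer with $a([n])=a_1+\cdots+a_n>d$, and let $I=I_{a,d}\subseteq S=K[x_1,\ldots,x_n]$ be the ideal of Veronese type. Let $k_0$ be the least positive integer $k$ such that $k(a([n])-d)\ge n-1$. Then the following are equivalent: (1) $\mathrm{Soc}(I)$ is equi-generated; (2) $\mathrm{Soc}^*(I)$ is equi-generated; (3) for every subset $A\subseteq[n]$ with $a(A)>d$ one has $k_0(a(A)-d)\ge|A|-1$.
   Context: $K$ is a field and $\mathfrak{m}=(x_1,\ldots,x_n)$. The ideal of Veronese type $I_{a,d}$ is generated by all monomials $x_1^{u_1}\cdots x_n^{u_n}$ of degree $d$ with $u_i\le a_i$ for all $i$. For $A\subseteq[n]$, $a(A)=\sum_{i\in A}a_i$. $\mathrm{Soc}(I)=\bigoplus_{m\ge0}(I^m:\mathfrak{m})/I^m$ is a graded module over the fiber cone $\mathcal{F}(I)=\bigoplus_{m\ge0}I^m/\mathfrak{m}I^m$ with $(I^m:\mathfrak{m})/I^m$ in degree $m$. For $m\ge1$, $\mathrm{soc}(I^m)$ is the ideal generated by the monomials $w$ of degree $md-1$ with $x_iw\in I^m$ for all $i$, and $\mathrm{Soc}^*(I)=\bigoplus_{m\ge1}\mathrm{soc}(I^m)$ is a graded module over the Rees ring $R(I)=\bigoplus_{m\ge0}I^m$ with $\mathrm{soc}(I^m)$ in degree $m$. A finitely generated graded module $M$ is equi-generated if it is generated by homogeneous elements of degree $\min\{i: M_i\neq0\}$. *)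

theory Defs
  imports "HOL-Library.Poly_Mapping"
begin

text \<open>Polynomials over a field: finitely supported maps from exponent vectors (monomials,
  nat =>0 nat, variable x_(i+1) is index i) to coefficients.  The ring S = K[x_1,...,x_n]
  is the subset of polynomials only involving the indices 0,...,n-1.\<close>

type_synonym 'k mpoly = "(nat \<Rightarrow>\<^sub>0 nat) \<Rightarrow>\<^sub>0 'k"

definition polyring :: "nat \<Rightarrow> 'k::field mpoly set" where
  "polyring n = {p. \<forall>\<mu>\<in>Poly_Mapping.keys p. Poly_Mapping.keys \<mu> \<subseteq> {..<n}}"

definition monom :: "(nat \<Rightarrow>\<^sub>0 nat) \<Rightarrow> 'k::field mpoly" where
  "monom \<mu> = Poly_Mapping.single \<mu> 1"

definition var :: "nat \<Rightarrow> 'k::field mpoly" where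
  "var i = monom (Poly_Mapping.single i 1)"

definition mdeg :: "(nat \<Rightarrow>\<^sub>0 nat) \<Rightarrow> nat" where
  "mdeg \<mu> = (\<Sum>i\<in>Poly_Mapping.keys \<mu>. Poly_Mapping.lookup \<mu> i)"

definition ideal_gen :: "nat \<Rightarrow> 'k::field mpoly set \<Rightarrow> 'k mpoly set" where
  "ideal_gen n G = {(\<Sum>g\<in>F. c g * g) | F c. finite F \<and> F \<subseteq> G \<and> (\<forall>g\<in>F. c g \<in> polyring n)}"

definition ideal_prod :: "nat \<Rightarrow> 'k::field mpoly set \<Rightarrow> 'k mpoly set \<Rightarrow> 'k mpoly set" where
  "ideal_prod n I J = ideal_gen n {f * g | f g. f \<in> I \<and> g \<in> J}"

fun ideal_pow :: "nat \<Rightarrow> 'k::field mpoly set \<Rightarrow> nat \<Rightarrow> 'k mpoly set" where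
  "ideal_pow n I 0 = polyring n"
| "ideal_pow n I (Suc m) = ideal_prod n (ideal_pow n I m) I"

definition colon_max :: "nat \<Rightarrow> 'k::field mpoly set \<Rightarrow> 'k mpoly set" where
  "colon_max n J = {f \<in> polyring n. \<forall>i<n. var i * f \<in> J}"

text \<open>Ideal of Veronese type I_{a,d} (indices shifted to 0,...,n-1).\<close>
definition veronese_ideal :: "nat \<Rightarrow> (nat \<Rightarrow> nat) \<Rightarrow> nat \<Rightarrow> 'k::field mpoly set" where
  "veronese_ideal n a d = ideal_gen n
     {monom u | u. Poly_Mapping.keys u \<subseteq> {..<n} \<and> mdeg u = d \<and> (\<forall>i<n. Poly_Mapping.lookup u i \<le> a i)}"

definition soc_ideal :: "nat \<Rightarrow> nat \<Rightarrow> 'k::field mpoly set \<Rightarrow> nat \<Rightarrow> 'k mpoly set" where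
  "soc_ideal n d I m = ideal_gen n
     {monom w | w. Poly_Mapping.keys w \<subseteq> {..<n} \<and> mdeg w = m * d - 1 \<and>
                   (\<forall>i<n. var i * monom w \<in> ideal_pow n I m)}"

text \<open>Soc(I) = (+)_{m>=0} (I^m : m)/I^m as graded module over the fiber cone F(I).
  Its degree-m component is nonzero iff (I^m : m) is not contained in I^m.  The F(I)-submodule
  generated by the degree-m0 component has degree-m component
  (I^{m-m0} (I^{m0} : m) + I^m)/I^m for m >= m0 (and 0 for m < m0).  Equi-generated: generated
  by the component of least degree with nonzero component (vacuous if the module is 0).\<close>
definition Soc_equigen :: "nat \<Rightarrow> 'k::field mpoly set \<Rightarrow> bool" where
  "Soc_equigen n I \<longleftrightarrow>
    (\<forall>m0. (\<not> colon_max n (ideal_pow n I m0) \<subseteq> ideal_pow n I m0 \<and>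
           (\<forall>i<m0. colon_max n (ideal_pow n I i) \<subseteq> ideal_pow n I i)) \<longrightarrow>
       (\<forall>m\<ge>m0. colon_max n (ideal_pow n I m) \<subseteq>
           {f + g | f g. f \<in> ideal_prod n (ideal_pow n I (m - m0)) (colon_max n (ideal_pow n I m0))
                        \<and> g \<in> ideal_pow n I m}))"

text \<open>Soc^*(I) = (+)_{m>=1} soc(I^m) as graded module over the Rees ring R(I) = (+) I^j;
  the submodule generated by the degree-m0 component has degree-m component
  I^{m-m0} soc(I^{m0}).\<close>
definition SocStar_equigen :: "nat \<Rightarrow> nat \<Rightarrow> 'k::field mpoly set \<Rightarrow> bool" where
  "SocStar_equigen n d I \<longleftrightarrow>
    (\<forall>m0\<ge>1. (soc_ideal n d I m0 \<noteq> {0} \<and> (\<forall>i. 1 \<le> i \<and> i < m0 \<longrightarrow> soc_ideal n d I i = {0})) \<longrightarrow>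
       (\<forall>m\<ge>m0. soc_ideal n d I m \<subseteq> ideal_prod n (ideal_pow n I (m - m0)) (soc_ideal n d I m0)))"

end

theory Submission
  imports Defs
begin

text \<open>
  All ideals involved are monomial ideals, so everything reduces to exponent vectors. A monomial
  x^nu lies in I^m iff it is divisible by a monomial of degree m d with exponents bounded by m a,
  i.e. iff sum_i min(nu_i, m a_i) >= m d. Hence the colon ideal (I^m : (x_1,...,x_n)) is generated
  by I^m together with the socle monomials of degree m, the w of degree m d - 1 with w_i < m a_i for
  all i, and these socle monomials also generate soc(I^m). A socle monomial of degree k supported
  on A exists iff k (a(A) - d) >= |A| - 1; for A = [n] this shows that k_0 is the least degree in
  which Soc(I) and Soc^*(I) are nonzero. Both modules are then equi-generated iff every socle
  monomial of degree m >= k_0 is divisible by the product of a generator of I^(m - k_0) and a socle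
  monomial of degree k_0.

  If (3) fails for A, a socle monomial of large degree supported on A cannot split this way, since
  its factor of degree k_0 would be a socle monomial supported on A. If (3) holds for k, a socle
  monomial w of degree m splits off a factor v with max(0, w_i - (m - k) a_i) <= v_i <=
  min(w_i, k a_i - 1) and |v| = k d - 1: the lower bounds sum to at most k d - 1 because of the
  degree of w, and the upper bounds to at least k d - 1 by (3) applied to the set B of indices with
  w_i >= k a_i - 1 (or by the degree of w again if a(B) <= d).
\<close>

abbreviation lookup :: "('a \<Rightarrow>\<^sub>0 'b::zero) \<Rightarrow> 'a \<Rightarrow> 'b" where
  "lookup \<equiv> Poly_Mapping.lookup"

abbreviation keys :: "('a \<Rightarrow>\<^sub>0 'b::zero) \<Rightarrow> 'a set" where
  "keys \<equiv> Poly_Mapping.keys"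

section \<open>Exponent vectors\<close>

definition mdvd :: "(nat \<Rightarrow>\<^sub>0 nat) \<Rightarrow> (nat \<Rightarrow>\<^sub>0 nat) \<Rightarrow> bool" where
  "mdvd \<mu> \<nu> \<longleftrightarrow> (\<forall>i. lookup \<mu> i \<le> lookup \<nu> i)"

lemma mdvd_refl [simp]: "mdvd \<mu> \<mu>"
  by (simp add: mdvd_def)

lemma mdvd_trans: "mdvd \<mu> \<nu> \<Longrightarrow> mdvd \<nu> \<kappa> \<Longrightarrow> mdvd \<mu> \<kappa>"
  unfolding mdvd_def using le_trans by blast

lemma mdvd_add_left: "mdvd \<mu> \<nu> \<Longrightarrow> mdvd \<mu> (\<kappa> + \<nu>)"
  by (simp add: mdvd_def lookup_add trans_le_add2)

lemma mdvd_add: "mdvd \<mu> \<nu> \<Longrightarrow> mdvd \<mu>' \<nu>' \<Longrightarrow> mdvd (\<mu> + \<mu>') (\<nu> + \<nu>')"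
  by (simp add: mdvd_def lookup_add add_mono)

lemma mdvd_diff_add: "mdvd \<mu> \<nu> \<Longrightarrow> (\<nu> - \<mu>) + \<mu> = \<nu>"
  by (rule poly_mapping_eqI) (simp add: mdvd_def lookup_add lookup_minus)

lemma keys_add_nat: "keys ((\<mu> :: nat \<Rightarrow>\<^sub>0 nat) + \<nu>) = keys \<mu> \<union> keys \<nu>"
  by (auto simp: in_keys_iff lookup_add)

lemma keys_diff_subset: "keys ((\<nu> :: nat \<Rightarrow>\<^sub>0 nat) - \<mu>) \<subseteq> keys \<nu>"
  by (auto simp: in_keys_iff lookup_minus)

lemma keys_subset_if_mdvd: "mdvd \<mu> \<nu> \<Longrightarrow> keys \<mu> \<subseteq> keys \<nu>"
  by (simp add: mdvd_def in_keys_iff subset_iff) (metis less_le_trans)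

lemma lookup_eq_0_if_keys_subset: "keys \<mu> \<subseteq> {..<n} \<Longrightarrow> \<not> i < n \<Longrightarrow> lookup \<mu> i = 0"
  by (auto simp: in_keys_iff)

lemma mdeg_eq_sum_superset: "finite S \<Longrightarrow> keys \<mu> \<subseteq> S \<Longrightarrow> mdeg \<mu> = sum (lookup \<mu>) S"
  unfolding mdeg_def by (rule sum.mono_neutral_left) (auto simp: in_keys_iff)

lemma mdeg_eq_sum: "keys \<mu> \<subseteq> {..<n} \<Longrightarrow> mdeg \<mu> = (\<Sum>i<n. lookup \<mu> i)"
  by (simp add: mdeg_eq_sum_superset)

lemma mdeg_add: "mdeg (\<mu> + \<nu>) = mdeg \<mu> + mdeg \<nu>"
proof -
  let ?S = "keys \<mu> \<union> keys \<nu>"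
  have "mdeg (\<mu> + \<nu>) = sum (lookup (\<mu> + \<nu>)) ?S"
    by (simp add: mdeg_eq_sum_superset keys_add_nat)
  also have "\<dots> = sum (lookup \<mu>) ?S + sum (lookup \<nu>) ?S"
    by (simp add: lookup_add sum.distrib)
  also have "\<dots> = mdeg \<mu> + mdeg \<nu>"
    using mdeg_eq_sum_superset[of ?S \<mu>] mdeg_eq_sum_superset[of ?S \<nu>] by simp
  finally show ?thesis .
qed

lemma mdeg_diff: "mdvd \<nu> \<kappa> \<Longrightarrow> mdeg (\<kappa> - \<nu>) = mdeg \<kappa> - mdeg \<nu>"
  using mdeg_add[of "\<kappa> - \<nu>" \<nu>] by (simp add: mdvd_diff_add)

lemma mdeg_mono: "mdvd \<mu> \<nu> \<Longrightarrow> mdeg \<mu> \<le> mdeg \<nu>"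
  using keys_subset_if_mdvd[of \<mu> \<nu>]
  by (simp add: mdeg_eq_sum_superset[of "keys \<nu>"] sum_mono mdvd_def)

lemma not_mdvd_if_mdeg_less: "mdeg w < mdeg \<mu> \<Longrightarrow> \<not> mdvd \<mu> w"
  using mdeg_mono leD by blast

definition expvec :: "nat \<Rightarrow> (nat \<Rightarrow> nat) \<Rightarrow> nat \<Rightarrow>\<^sub>0 nat" where
  "expvec n f = Abs_poly_mapping (\<lambda>i. if i < n then f i else 0)"

lemma lookup_expvec: "lookup (expvec n f) i = (if i < n then f i else 0)"
proof -
  have "finite {i. (if i < n then f i else 0) \<noteq> 0}"
    by (rule finite_subset[of _ "{..<n}"]) auto
  then show ?thesis
    by (simp add: expvec_def)
qed

lemma keys_expvec_subset: "keys (expvec n f) \<subseteq> {..<n}"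
  by (auto simp: in_keys_iff lookup_expvec split: if_splits)

lemma mdeg_expvec: "mdeg (expvec n f) = (\<Sum>i<n. f i)"
  by (simp add: mdeg_eq_sum[OF keys_expvec_subset] lookup_expvec)

lemma ex_bounded_summands:
  fixes l u :: "'a \<Rightarrow> nat"
  assumes "finite I" "\<forall>i\<in>I. l i \<le> u i" "sum l I \<le> t" "t \<le> sum u I"
  shows "\<exists>x. (\<forall>i\<in>I. l i \<le> x i \<and> x i \<le> u i) \<and> sum x I = t"
  using assms
proof (induction I arbitrary: t rule: finite_induct)
  case empty
  then show ?case by simp
next
  case (insert j F)
  define xj where "xj = min (u j) (t - sum l F)"
  have "sum l F \<le> sum u F"
    using insert.prems(1) by (intro sum_mono) auto
  then have "sum l F \<le> t - xj" "t - xj \<le> sum u F"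
    using insert.prems insert.hyps by (auto simp: xj_def min_def)
  then obtain x where x: "\<forall>i\<in>F. l i \<le> x i \<and> x i \<le> u i" "sum x F = t - xj"
    using insert.IH insert.prems(1) by blast
  have "sum (x(j := xj)) F = sum x F"
    using insert.hyps by (intro sum.cong) auto
  moreover have "l j \<le> xj" "xj \<le> u j" "xj \<le> t"
    using insert.prems insert.hyps by (auto simp: xj_def)
  ultimately show ?case
    using x insert.hyps by (intro exI[of _ "x(j := xj)"]) auto
qed

lemma ex_mdvd_between:
  assumes "keys \<kappa> \<subseteq> {..<n}" "\<forall>i<n. l i \<le> u i \<and> u i \<le> lookup \<kappa> i"
    and "sum l {..<n} \<le> t" "t \<le> sum u {..<n}"
  obtains \<nu> where "mdvd \<nu> \<kappa>" "keys \<nu> \<subseteq> {..<n}" "mdeg \<nu> = t"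
    "\<forall>i<n. l i \<le> lookup \<nu> i \<and> lookup \<nu> i \<le> u i"
proof -
  obtain y where y: "\<forall>i\<in>{..<n}. l i \<le> y i \<and> y i \<le> u i" "sum y {..<n} = t"
    using ex_bounded_summands[of "{..<n}" l u t] assms(2-4) by auto
  show ?thesis
  proof (rule that)
    show "mdvd (expvec n y) \<kappa>"
      using assms(1,2) y(1) by (auto simp: mdvd_def lookup_expvec lookup_eq_0_if_keys_subset intro: le_trans)
  qed (use y in \<open>auto simp: keys_expvec_subset mdeg_expvec lookup_expvec\<close>)
qed

section \<open>Monomial ideals\<close>

lemma polyring_iff: "p \<in> polyring n \<longleftrightarrow> (\<forall>\<mu>\<in>keys p. keys \<mu> \<subseteq> {..<n})"
  by (simp add: polyring_def)

lemma keys_polyringD: "p \<in> polyring n \<Longrightarrow> \<nu> \<in> keys p \<Longrightarrow> keys \<nu> \<subseteq> {..<n}"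
  by (simp add: polyring_iff)

lemma polyring_zero [simp]: "0 \<in> polyring n"
  by (simp add: polyring_iff)

lemma polyring_add: "p \<in> polyring n \<Longrightarrow> q \<in> polyring n \<Longrightarrow> p + q \<in> polyring n"
  unfolding polyring_iff using keys_add[of p q] by blast

lemma polyring_mult: "p \<in> polyring n \<Longrightarrow> q \<in> polyring n \<Longrightarrow> p * q \<in> polyring n"
  unfolding polyring_iff using keys_mult[of p q] by (fastforce simp: keys_add_nat)

lemma polyring_sum: "(\<And>x. x \<in> X \<Longrightarrow> f x \<in> polyring n) \<Longrightarrow> sum f X \<in> polyring n"
  by (induction X rule: infinite_finite_induct) (auto intro: polyring_add)

lemma polyring_single: "keys \<mu> \<subseteq> {..<n} \<Longrightarrow> Poly_Mapping.single \<mu> c \<in> polyring n"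
  by (simp add: polyring_iff)

lemma keys_monom [simp]: "keys (monom \<mu> :: 'k::field mpoly) = {\<mu>}"
  by (simp add: monom_def)

lemma poly_mapping_sum_single: "f = (\<Sum>\<nu>\<in>keys f. Poly_Mapping.single \<nu> (lookup f \<nu>))"
  by (rule poly_mapping_eqI) (simp add: lookup_sum lookup_single when_def in_keys_iff)

lemma keys_monom_mult: "keys (monom e * f :: 'k::field mpoly) = (\<lambda>\<nu>. e + \<nu>) ` keys f"
proof
  show "keys (monom e * f) \<subseteq> (\<lambda>\<nu>. e + \<nu>) ` keys f"
    using keys_mult[of "monom e" f] by auto
  have "monom e * f = (\<Sum>\<nu>\<in>keys f. Poly_Mapping.single (e + \<nu>) (lookup f \<nu>))"
    by (subst poly_mapping_sum_single[of f]) (simp add: sum_distrib_left monom_def mult_single)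
  then have "lookup (monom e * f) (e + \<nu>) = lookup f \<nu>" for \<nu>
    by (simp add: lookup_sum lookup_single when_def in_keys_iff)
  then show "(\<lambda>\<nu>. e + \<nu>) ` keys f \<subseteq> keys (monom e * f)"
    by (auto simp: in_keys_iff)
qed

lemma ideal_gen_zero: "0 \<in> ideal_gen n G"
  unfolding ideal_gen_def by (rule CollectI, rule exI[of _ "{}"]) auto

lemma ideal_gen_mult: "g \<in> G \<Longrightarrow> c \<in> polyring n \<Longrightarrow> c * g \<in> ideal_gen n G"
  unfolding ideal_gen_def by (rule CollectI, rule exI[of _ "{g}"], rule exI[of _ "\<lambda>_. c"]) auto

lemma ideal_gen_add:
  assumes "p \<in> ideal_gen n G" "q \<in> ideal_gen n G"
  shows "p + q \<in> ideal_gen n G"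
proof -
  obtain F c where p: "p = (\<Sum>g\<in>F. c g * g)" "finite F" "F \<subseteq> G" "\<forall>g\<in>F. c g \<in> polyring n"
    using assms(1) unfolding ideal_gen_def by blast
  obtain F' c' where q: "q = (\<Sum>g\<in>F'. c' g * g)" "finite F'" "F' \<subseteq> G" "\<forall>g\<in>F'. c' g \<in> polyring n"
    using assms(2) unfolding ideal_gen_def by blast
  define e where "e g = (if g \<in> F then c g else 0) + (if g \<in> F' then c' g else 0)" for g
  have "(\<Sum>g\<in>F \<union> F'. e g * g)
      = (\<Sum>g\<in>F \<union> F'. if g \<in> F then c g * g else 0) + (\<Sum>g\<in>F \<union> F'. if g \<in> F' then c' g * g else 0)"
    unfolding sum.distrib[symmetric] by (rule sum.cong) (auto simp: e_def distrib_right)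
  also have "\<dots> = p + q"
    using p(1,2) q(1,2) sum.inter_restrict[of "F \<union> F'" "\<lambda>g. c g * g" F]
      sum.inter_restrict[of "F \<union> F'" "\<lambda>g. c' g * g" F'] by (simp add: Un_Int_eq)
  finally have "p + q = (\<Sum>g\<in>F \<union> F'. e g * g)" ..
  moreover have "\<forall>g\<in>F \<union> F'. e g \<in> polyring n"
    using p(4) q(4) by (auto simp: e_def intro: polyring_add)
  ultimately show ?thesis
    using p(2,3) q(2,3) unfolding ideal_gen_def by blast
qed

lemma ideal_gen_sum: "(\<And>x. x \<in> X \<Longrightarrow> f x \<in> ideal_gen n G) \<Longrightarrow> sum f X \<in> ideal_gen n G"
  by (induction X rule: infinite_finite_induct) (auto intro: ideal_gen_zero ideal_gen_add)

lemma ideal_gen_mono: "G \<subseteq> H \<Longrightarrow> ideal_gen n G \<subseteq> ideal_gen n H"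
  unfolding ideal_gen_def by blast

definition monomial_ideal :: "nat \<Rightarrow> (nat \<Rightarrow>\<^sub>0 nat) set \<Rightarrow> 'k::field mpoly set" where
  "monomial_ideal n M = {p \<in> polyring n. \<forall>\<nu>\<in>keys p. \<exists>\<mu>\<in>M. mdvd \<mu> \<nu>}"

lemma monomial_ideal_zero [simp]: "0 \<in> monomial_ideal n M"
  by (simp add: monomial_ideal_def)

lemma monomial_ideal_add:
  "p \<in> monomial_ideal n M \<Longrightarrow> q \<in> monomial_ideal n M \<Longrightarrow> p + q \<in> monomial_ideal n M"
  unfolding monomial_ideal_def using keys_add[of p q] by (auto intro: polyring_add)

lemma monomial_ideal_mult:
  assumes "c \<in> polyring n" "p \<in> monomial_ideal n M"
  shows "c * p \<in> monomial_ideal n M"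
proof -
  have "\<exists>\<mu>\<in>M. mdvd \<mu> \<nu>" if \<nu>: "\<nu> \<in> keys (c * p)" for \<nu>
  proof -
    obtain \<kappa> \<nu>' where "\<nu> = \<kappa> + \<nu>'" "\<nu>' \<in> keys p"
      using \<nu> keys_mult[of c p] by auto
    then show ?thesis
      using assms(2) by (auto simp: monomial_ideal_def intro: mdvd_add_left)
  qed
  then show ?thesis
    using assms by (auto simp: monomial_ideal_def intro: polyring_mult)
qed

lemma monomial_ideal_sum:
  "(\<And>x. x \<in> X \<Longrightarrow> f x \<in> monomial_ideal n M) \<Longrightarrow> sum f X \<in> monomial_ideal n M"
  by (induction X rule: infinite_finite_induct) (auto intro: monomial_ideal_add)

lemma ideal_gen_subset_monomial_ideal:
  "G \<subseteq> monomial_ideal n M \<Longrightarrow> ideal_gen n G \<subseteq> monomial_ideal n M"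
  unfolding ideal_gen_def by (auto intro!: monomial_ideal_sum monomial_ideal_mult)

lemma monom_in_monomial_ideal_iff:
  "(monom \<nu> :: 'k::field mpoly) \<in> monomial_ideal n M \<longleftrightarrow> keys \<nu> \<subseteq> {..<n} \<and> (\<exists>\<mu>\<in>M. mdvd \<mu> \<nu>)"
  by (auto simp: monomial_ideal_def polyring_iff)

lemma monom_in_monomial_ideal:
  "\<nu> \<in> M \<Longrightarrow> keys \<nu> \<subseteq> {..<n} \<Longrightarrow> (monom \<nu> :: 'k::field mpoly) \<in> monomial_ideal n M"
  using mdvd_refl monom_in_monomial_ideal_iff by blast

lemma monomial_ideal_subset_ideal_gen:
  assumes "M \<subseteq> {\<mu>. keys \<mu> \<subseteq> {..<n}}"
  shows "monomial_ideal n M \<subseteq> (ideal_gen n (monom ` M) :: 'k::field mpoly set)"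
proof
  fix p :: "'k mpoly"
  assume p: "p \<in> monomial_ideal n M"
  have "Poly_Mapping.single \<nu> (lookup p \<nu>) \<in> ideal_gen n (monom ` M)" if \<nu>: "\<nu> \<in> keys p" for \<nu>
  proof -
    obtain \<mu> where \<mu>: "\<mu> \<in> M" "mdvd \<mu> \<nu>"
      using p \<nu> by (auto simp: monomial_ideal_def)
    have "Poly_Mapping.single \<nu> (lookup p \<nu>) = Poly_Mapping.single (\<nu> - \<mu>) (lookup p \<nu>) * monom \<mu>"
      by (simp add: monom_def mult_single mdvd_diff_add[OF \<mu>(2)])
    moreover have "Poly_Mapping.single (\<nu> - \<mu>) (lookup p \<nu>) \<in> polyring n"
      using p \<nu> keys_diff_subset[of \<nu> \<mu>]
      by (intro polyring_single) (auto simp: monomial_ideal_def polyring_iff)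
    ultimately show ?thesis
      using \<mu>(1) by (auto intro: ideal_gen_mult)
  qed
  then show "p \<in> ideal_gen n (monom ` M)"
    by (subst poly_mapping_sum_single) (rule ideal_gen_sum)
qed

lemma ideal_gen_monom_image:
  assumes "M \<subseteq> {\<mu>. keys \<mu> \<subseteq> {..<n}}"
  shows "ideal_gen n (monom ` M) = (monomial_ideal n M :: 'k::field mpoly set)"
proof
  show "ideal_gen n (monom ` M) \<subseteq> (monomial_ideal n M :: 'k mpoly set)"
    using assms by (intro ideal_gen_subset_monomial_ideal) (auto intro: monom_in_monomial_ideal)
qed (rule monomial_ideal_subset_ideal_gen[OF assms])

lemma monomial_ideal_subset_iff:
  assumes "M \<subseteq> {\<mu>. keys \<mu> \<subseteq> {..<n}}"
  shows "monomial_ideal n M \<subseteq> (monomial_ideal n N :: 'k::field mpoly set)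
    \<longleftrightarrow> (\<forall>\<mu>\<in>M. \<exists>\<nu>\<in>N. mdvd \<nu> \<mu>)"
proof
  assume sub: "monomial_ideal n M \<subseteq> (monomial_ideal n N :: 'k mpoly set)"
  show "\<forall>\<mu>\<in>M. \<exists>\<nu>\<in>N. mdvd \<nu> \<mu>"
  proof
    fix \<mu> assume "\<mu> \<in> M"
    then have "(monom \<mu> :: 'k mpoly) \<in> monomial_ideal n N"
      using assms sub monom_in_monomial_ideal by blast
    then show "\<exists>\<nu>\<in>N. mdvd \<nu> \<mu>"
      by (simp add: monom_in_monomial_ideal_iff)
  qed
next
  assume "\<forall>\<mu>\<in>M. \<exists>\<nu>\<in>N. mdvd \<nu> \<mu>"
  then show "monomial_ideal n M \<subseteq> (monomial_ideal n N :: 'k mpoly set)"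
    unfolding monomial_ideal_def by (blast intro: mdvd_trans)
qed

lemma monomial_ideal_eq_zero_iff:
  assumes "M \<subseteq> {\<mu>. keys \<mu> \<subseteq> {..<n}}"
  shows "(monomial_ideal n M :: 'k::field mpoly set) = {0} \<longleftrightarrow> M = {}"
proof
  assume zero: "(monomial_ideal n M :: 'k mpoly set) = {0}"
  show "M = {}"
  proof (rule ccontr)
    assume "M \<noteq> {}"
    then obtain \<mu> where "\<mu> \<in> M"
      by blast
    then have "(monom \<mu> :: 'k mpoly) \<in> monomial_ideal n M"
      using assms by (blast intro: monom_in_monomial_ideal)
    moreover have "(monom \<mu> :: 'k mpoly) \<noteq> 0"
      using keys_monom[of \<mu>, where 'k='k] by (metis empty_not_insert keys_zero)
    ultimately show False
      using zero by blast
  qed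
qed (auto simp: monomial_ideal_def)

lemma mult_mem_monomial_ideal_sumset:
  assumes f: "f \<in> monomial_ideal n M" and g: "g \<in> monomial_ideal n N"
  shows "f * g \<in> (monomial_ideal n {\<mu> + \<nu> | \<mu> \<nu>. \<mu> \<in> M \<and> \<nu> \<in> N} :: 'k::field mpoly set)"
proof -
  have "\<exists>\<mu>\<nu>\<in>{\<mu> + \<nu> | \<mu> \<nu>. \<mu> \<in> M \<and> \<nu> \<in> N}. mdvd \<mu>\<nu> \<kappa>" if \<kappa>: "\<kappa> \<in> keys (f * g)" for \<kappa>
  proof -
    obtain x y where xy: "\<kappa> = x + y" "x \<in> keys f" "y \<in> keys g"
      using \<kappa> keys_mult[of f g] by auto
    obtain \<mu> \<nu> where "\<mu> \<in> M" "mdvd \<mu> x" "\<nu> \<in> N" "mdvd \<nu> y"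
      using f g xy(2,3) unfolding monomial_ideal_def by blast
    then show ?thesis
      using xy(1) mdvd_add by blast
  qed
  then show ?thesis
    using f g by (auto simp: monomial_ideal_def intro: polyring_mult)
qed

lemma ideal_prod_monomial_ideal:
  assumes "M \<subseteq> {\<mu>. keys \<mu> \<subseteq> {..<n}}" "N \<subseteq> {\<mu>. keys \<mu> \<subseteq> {..<n}}"
  shows "ideal_prod n (monomial_ideal n M) (monomial_ideal n N)
    = (monomial_ideal n {\<mu> + \<nu> | \<mu> \<nu>. \<mu> \<in> M \<and> \<nu> \<in> N} :: 'k::field mpoly set)"
    (is "?L = monomial_ideal n ?MN")
proof
  show "?L \<subseteq> monomial_ideal n ?MN"
    unfolding ideal_prod_def using mult_mem_monomial_ideal_sumset
    by (intro ideal_gen_subset_monomial_ideal) blast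
  have "?MN \<subseteq> {\<mu>. keys \<mu> \<subseteq> {..<n}}"
  proof
    fix \<kappa> assume "\<kappa> \<in> ?MN"
    then obtain \<mu> \<nu> where "\<kappa> = \<mu> + \<nu>" "\<mu> \<in> M" "\<nu> \<in> N"
      by blast
    then show "\<kappa> \<in> {\<mu>. keys \<mu> \<subseteq> {..<n}}"
      using assms by (simp add: keys_add_nat) blast
  qed
  then have "monomial_ideal n ?MN \<subseteq> (ideal_gen n (monom ` ?MN) :: 'k mpoly set)"
    by (rule monomial_ideal_subset_ideal_gen)
  also have "\<dots> \<subseteq> ?L"
    unfolding ideal_prod_def
  proof (rule ideal_gen_mono, rule image_subsetI)
    fix \<kappa> assume "\<kappa> \<in> ?MN"
    then obtain \<mu> \<nu> where \<kappa>: "\<kappa> = \<mu> + \<nu>" and "\<mu> \<in> M" "\<nu> \<in> N"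
      by blast
    then have "(monom \<mu> :: 'k mpoly) \<in> monomial_ideal n M" "(monom \<nu> :: 'k mpoly) \<in> monomial_ideal n N"
      using assms by (auto intro: monom_in_monomial_ideal)
    moreover have "(monom \<kappa> :: 'k mpoly) = monom \<mu> * monom \<nu>"
      by (simp add: \<kappa> monom_def mult_single)
    ultimately show "(monom \<kappa> :: 'k mpoly) \<in> {f * g |f g. f \<in> monomial_ideal n M \<and> g \<in> monomial_ideal n N}"
      by blast
  qed
  finally show "monomial_ideal n ?MN \<subseteq> ?L" .
qed

lemma monomial_ideal_Un:
  "monomial_ideal n (M \<union> N)
    = {f + g | f g. f \<in> monomial_ideal n M \<and> g \<in> (monomial_ideal n N :: 'k::field mpoly set)}"
proof (intro set_eqI iffI)
  fix p :: "'k mpoly"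
  assume p: "p \<in> monomial_ideal n (M \<union> N)"
  define U where "U = {\<nu>. \<exists>\<mu>\<in>M. mdvd \<mu> \<nu>}"
  define part where "part K = (\<Sum>\<nu>\<in>K. Poly_Mapping.single \<nu> (lookup p \<nu>))" for K
  have part_in: "part K \<in> monomial_ideal n L"
    if "K \<subseteq> keys p" "\<forall>\<nu>\<in>K. \<exists>\<mu>\<in>L. mdvd \<mu> \<nu>" for K L
  proof -
    have "keys (part K) \<subseteq> K"
      using keys_sum[of "\<lambda>\<nu>. Poly_Mapping.single \<nu> (lookup p \<nu>)" K] by (auto simp: part_def)
    moreover have "part K \<in> polyring n"
      unfolding part_def using p that(1) keys_polyringD[of p n]
      by (intro polyring_sum polyring_single) (auto simp: monomial_ideal_def)
    ultimately show ?thesis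
      using that(2) by (auto simp: monomial_ideal_def)
  qed
  have "p = part (keys p)"
    unfolding part_def by (rule poly_mapping_sum_single)
  also have "\<dots> = part (keys p \<inter> U) + part (keys p - U)"
    unfolding part_def by (rule sum.Int_Diff) simp
  finally have "p = part (keys p \<inter> U) + part (keys p - U)" .
  moreover have "part (keys p \<inter> U) \<in> monomial_ideal n M"
    by (rule part_in) (auto simp: U_def)
  moreover have "part (keys p - U) \<in> monomial_ideal n N"
    using p by (intro part_in) (auto simp: U_def monomial_ideal_def)
  ultimately show "p \<in> {f + g | f g. f \<in> monomial_ideal n M \<and> g \<in> monomial_ideal n N}"
    by blast
next
  fix p :: "'k mpoly"
  assume "p \<in> {f + g | f g. f \<in> monomial_ideal n M \<and> g \<in> monomial_ideal n N}"
  moreover have "monomial_ideal n M \<union> monomial_ideal n N \<subseteq> (monomial_ideal n (M \<union> N) :: 'k mpoly set)"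
    by (auto simp: monomial_ideal_def)
  ultimately show "p \<in> monomial_ideal n (M \<union> N)"
    by (auto intro: monomial_ideal_add)
qed

lemma var_mult_in_monomial_ideal_iff:
  assumes "f \<in> polyring n" "i < n"
  shows "(var i * f :: 'k::field mpoly) \<in> monomial_ideal n M
    \<longleftrightarrow> (\<forall>\<nu>\<in>keys f. \<exists>\<mu>\<in>M. mdvd \<mu> (Poly_Mapping.single i 1 + \<nu>))"
proof -
  have "var i \<in> (polyring n :: 'k mpoly set)"
    using assms(2) by (simp add: var_def monom_def polyring_single)
  then have "var i * f \<in> polyring n"
    using assms(1) polyring_mult by blast
  then show ?thesis
    by (simp add: monomial_ideal_def var_def keys_monom_mult)
qed

section \<open>Powers of an ideal of Veronese type\<close>

definition veronese_monoms :: "nat \<Rightarrow> (nat \<Rightarrow> nat) \<Rightarrow> nat \<Rightarrow> (nat \<Rightarrow>\<^sub>0 nat) set" where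
  "veronese_monoms n b e = {\<mu>. keys \<mu> \<subseteq> {..<n} \<and> mdeg \<mu> = e \<and> (\<forall>i<n. lookup \<mu> i \<le> b i)}"

lemma veronese_monoms_subset: "veronese_monoms n b e \<subseteq> {\<mu>. keys \<mu> \<subseteq> {..<n}}"
  by (auto simp: veronese_monoms_def)

definition capped_deg :: "nat \<Rightarrow> (nat \<Rightarrow> nat) \<Rightarrow> (nat \<Rightarrow>\<^sub>0 nat) \<Rightarrow> nat" where
  "capped_deg n b \<nu> = (\<Sum>i<n. min (lookup \<nu> i) (b i))"

lemma capped_deg_mono: "mdvd \<mu> \<nu> \<Longrightarrow> capped_deg n b \<mu> \<le> capped_deg n b \<nu>"
  unfolding capped_deg_def mdvd_def by (intro sum_mono) (simp add: min.coboundedI1)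

lemma capped_deg_le_mdeg: "keys \<nu> \<subseteq> {..<n} \<Longrightarrow> capped_deg n b \<nu> \<le> mdeg \<nu>"
  unfolding capped_deg_def by (simp add: mdeg_eq_sum sum_mono)

lemma capped_deg_eq_mdeg:
  "keys \<nu> \<subseteq> {..<n} \<Longrightarrow> \<forall>i<n. lookup \<nu> i \<le> b i \<Longrightarrow> capped_deg n b \<nu> = mdeg \<nu>"
  unfolding capped_deg_def by (simp add: mdeg_eq_sum)

lemma capped_deg_single_add:
  assumes "i < n"
  shows "capped_deg n b (Poly_Mapping.single i 1 + \<nu>)
    = capped_deg n b \<nu> + (if lookup \<nu> i < b i then 1 else 0)"
proof -
  have "min (lookup (Poly_Mapping.single i 1 + \<nu>) j) (b j)
      = min (lookup \<nu> j) (b j) + (if j = i \<and> lookup \<nu> i < b i then 1 else 0)" for j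
    by (auto simp: lookup_add lookup_single when_def)
  then show ?thesis
    using assms by (simp add: capped_deg_def sum.distrib)
qed

lemma ex_veronese_mdvd_iff:
  assumes "keys \<nu> \<subseteq> {..<n}"
  shows "(\<exists>\<mu>\<in>veronese_monoms n b e. mdvd \<mu> \<nu>) \<longleftrightarrow> e \<le> capped_deg n b \<nu>"
proof
  assume "\<exists>\<mu>\<in>veronese_monoms n b e. mdvd \<mu> \<nu>"
  then obtain \<mu> where \<mu>: "\<mu> \<in> veronese_monoms n b e" "mdvd \<mu> \<nu>"
    by blast
  then have "capped_deg n b \<mu> = e"
    by (simp add: veronese_monoms_def capped_deg_eq_mdeg)
  then show "e \<le> capped_deg n b \<nu>"
    using capped_deg_mono[OF \<mu>(2), of n b] by simp
next
  assume "e \<le> capped_deg n b \<nu>"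
  then obtain \<mu> where "mdvd \<mu> \<nu>" "keys \<mu> \<subseteq> {..<n}" "mdeg \<mu> = e"
    "\<forall>i<n. 0 \<le> lookup \<mu> i \<and> lookup \<mu> i \<le> min (lookup \<nu> i) (b i)"
    using ex_mdvd_between[OF assms, of "\<lambda>_. 0" "\<lambda>i. min (lookup \<nu> i) (b i)" e]
    unfolding capped_deg_def by auto
  then show "\<exists>\<mu>\<in>veronese_monoms n b e. mdvd \<mu> \<nu>"
    by (auto simp: veronese_monoms_def)
qed

lemma veronese_ideal_eq: "veronese_ideal n a d = (monomial_ideal n (veronese_monoms n a d) :: 'k::field mpoly set)"
proof -
  have "{monom u | u. keys u \<subseteq> {..<n} \<and> mdeg u = d \<and> (\<forall>i<n. lookup u i \<le> a i)}
      = (monom ` veronese_monoms n a d :: 'k mpoly set)"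
    by (auto simp: veronese_monoms_def)
  then show ?thesis
    unfolding veronese_ideal_def using ideal_gen_monom_image[OF veronese_monoms_subset] by simp
qed

lemma mult_diff_mult_le:
  fixes x c j k :: nat
  assumes "x \<le> (j + k) * c"
  shows "(j + k) * (x - j * c) \<le> k * x"
proof (cases "j * c \<le> x")
  case True
  have "x - j * c \<le> k * c"
    using assms by (simp add: algebra_simps)
  then have "j * (x - j * c) \<le> j * (k * c)"
    by simp
  then have "(j + k) * (x - j * c) \<le> j * (k * c) + k * (x - j * c)"
    by (simp add: add_mult_distrib)
  also have "\<dots> = k * x"
    using True by (simp add: algebra_simps)
  finally show ?thesis .
qed simp

lemma mult_le_mult_min:
  fixes x c j k :: nat
  assumes "x \<le> (j + k) * c"
  shows "k * x \<le> (j + k) * min x (k * c)"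
proof (cases "x \<le> k * c")
  case False
  have "k * x \<le> k * ((j + k) * c)"
    using assms by simp
  then show ?thesis
    using False by (simp add: algebra_simps)
qed (simp add: algebra_simps)

lemma veronese_monom_split:
  assumes "0 < j + k" and \<kappa>: "\<kappa> \<in> veronese_monoms n (\<lambda>i. (j + k) * a i) ((j + k) * d)"
  shows "\<exists>\<mu>\<in>veronese_monoms n (\<lambda>i. j * a i) (j * d). \<exists>\<nu>\<in>veronese_monoms n (\<lambda>i. k * a i) (k * d). \<kappa> = \<mu> + \<nu>"
proof -
  have keys_\<kappa>: "keys \<kappa> \<subseteq> {..<n}" and sum_\<kappa>: "(\<Sum>i<n. lookup \<kappa> i) = (j + k) * d"
    and bound: "\<forall>i<n. lookup \<kappa> i \<le> (j + k) * a i"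
    using \<kappa> by (auto simp: veronese_monoms_def mdeg_eq_sum)
  define l where "l i = lookup \<kappa> i - j * a i" for i
  define u where "u i = min (lookup \<kappa> i) (k * a i)" for i
  have "\<forall>i<n. l i \<le> u i \<and> u i \<le> lookup \<kappa> i"
    using bound by (auto simp: l_def u_def algebra_simps)
  moreover have "sum l {..<n} \<le> k * d"
  proof -
    have "(j + k) * sum l {..<n} \<le> (\<Sum>i<n. k * lookup \<kappa> i)"
      unfolding sum_distrib_left l_def using bound by (intro sum_mono mult_diff_mult_le) auto
    then have "(j + k) * sum l {..<n} \<le> (j + k) * (k * d)"
      by (simp add: sum_distrib_left[symmetric] sum_\<kappa> algebra_simps)
    then show ?thesis
      using assms(1) by (metis mult_le_cancel1)
  qed
  moreover have "k * d \<le> sum u {..<n}"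
  proof -
    have "(\<Sum>i<n. k * lookup \<kappa> i) \<le> (j + k) * sum u {..<n}"
      unfolding sum_distrib_left u_def using bound by (intro sum_mono mult_le_mult_min) auto
    then have "(j + k) * (k * d) \<le> (j + k) * sum u {..<n}"
      by (simp add: sum_distrib_left[symmetric] sum_\<kappa> algebra_simps)
    then show ?thesis
      using assms(1) by (metis mult_le_cancel1)
  qed
  ultimately obtain \<nu> where \<nu>: "mdvd \<nu> \<kappa>" "keys \<nu> \<subseteq> {..<n}" "mdeg \<nu> = k * d"
    "\<forall>i<n. l i \<le> lookup \<nu> i \<and> lookup \<nu> i \<le> u i"
    using ex_mdvd_between[OF keys_\<kappa>] by blast
  have "\<kappa> = (\<kappa> - \<nu>) + \<nu>"
    using \<nu>(1) by (simp add: mdvd_diff_add)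
  moreover have "\<nu> \<in> veronese_monoms n (\<lambda>i. k * a i) (k * d)"
    using \<nu>(2-4) by (auto simp: veronese_monoms_def u_def)
  moreover have "\<kappa> - \<nu> \<in> veronese_monoms n (\<lambda>i. j * a i) (j * d)"
    using \<nu> \<kappa> keys_\<kappa> keys_diff_subset[of \<kappa> \<nu>]
    by (auto simp: veronese_monoms_def mdeg_diff lookup_minus l_def algebra_simps)
  ultimately show ?thesis
    by blast
qed

lemma veronese_monoms_add:
  assumes "0 < j + k"
  shows "{\<mu> + \<nu> | \<mu> \<nu>. \<mu> \<in> veronese_monoms n (\<lambda>i. j * a i) (j * d) \<and> \<nu> \<in> veronese_monoms n (\<lambda>i. k * a i) (k * d)}
    = veronese_monoms n (\<lambda>i. (j + k) * a i) ((j + k) * d)"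
proof
  show "{\<mu> + \<nu> | \<mu> \<nu>. \<mu> \<in> veronese_monoms n (\<lambda>i. j * a i) (j * d) \<and> \<nu> \<in> veronese_monoms n (\<lambda>i. k * a i) (k * d)}
      \<subseteq> veronese_monoms n (\<lambda>i. (j + k) * a i) ((j + k) * d)"
    by (fastforce simp: veronese_monoms_def keys_add_nat mdeg_add lookup_add algebra_simps intro: add_mono)
qed (use veronese_monom_split[OF assms] in blast)

lemma ideal_pow_veronese:
  "ideal_pow n (veronese_ideal n a d) m
    = (monomial_ideal n (veronese_monoms n (\<lambda>i. m * a i) (m * d)) :: 'k::field mpoly set)"
proof (induction m)
  case 0
  have "\<mu> = 0" if "keys \<mu> \<subseteq> {..<n}" "\<forall>i<n. lookup \<mu> i = 0" for \<mu> :: "nat \<Rightarrow>\<^sub>0 nat"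
    using that by (metis lookup_eq_0_if_keys_subset lookup_zero poly_mapping_eqI)
  then have "veronese_monoms n (\<lambda>i. 0 * a i) (0 * d) = {0}"
    by (auto simp: veronese_monoms_def mdeg_def)
  moreover have "monomial_ideal n {0} = (polyring n :: 'k mpoly set)"
    by (auto simp: monomial_ideal_def mdvd_def)
  ultimately show ?case
    by simp
next
  case (Suc m)
  have "veronese_monoms n a d = veronese_monoms n (\<lambda>i. 1 * a i) (1 * d)"
    by simp
  then show ?case
    using Suc veronese_monoms_add[of m 1 n a d]
    by (simp add: veronese_ideal_eq ideal_prod_monomial_ideal veronese_monoms_subset)
qed

section \<open>Socle monomials\<close>

definition socle_monoms :: "nat \<Rightarrow> (nat \<Rightarrow> nat) \<Rightarrow> nat \<Rightarrow> (nat \<Rightarrow>\<^sub>0 nat) set" where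
  "socle_monoms n b e = {w. keys w \<subseteq> {..<n} \<and> mdeg w = e - 1 \<and> (\<forall>i<n. lookup w i < b i)}"

lemma socle_monoms_subset: "socle_monoms n b e \<subseteq> {\<mu>. keys \<mu> \<subseteq> {..<n}}"
  by (auto simp: socle_monoms_def)

lemma keys_single_add_subset:
  "i < n \<Longrightarrow> keys \<nu> \<subseteq> {..<n} \<Longrightarrow> keys (Poly_Mapping.single i 1 + (\<nu> :: nat \<Rightarrow>\<^sub>0 nat)) \<subseteq> {..<n}"
  by (simp add: keys_add_nat)

lemma lookup_less_if_capped_deg_single_add:
  assumes "i < n" "capped_deg n b \<nu> < capped_deg n b (Poly_Mapping.single i 1 + \<nu>)"
  shows "lookup \<nu> i < b i"
  using assms(2) unfolding capped_deg_single_add[OF assms(1)] by (auto split: if_splits)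

lemma capped_deg_single_add_ge_iff:
  assumes "keys w \<subseteq> {..<n}" "mdeg w = e - 1" "0 < e"
  shows "(\<forall>i<n. e \<le> capped_deg n b (Poly_Mapping.single i 1 + w)) \<longleftrightarrow> (\<forall>i<n. lookup w i < b i)"
proof
  assume "\<forall>i<n. e \<le> capped_deg n b (Poly_Mapping.single i 1 + w)"
  moreover have "capped_deg n b w < e"
    using capped_deg_le_mdeg[OF assms(1), of b] assms(2,3) by arith
  ultimately show "\<forall>i<n. lookup w i < b i"
    using lookup_less_if_capped_deg_single_add less_le_trans by blast
next
  assume "\<forall>i<n. lookup w i < b i"
  moreover from this have "capped_deg n b w = e - 1"
    using assms(1,2) capped_deg_eq_mdeg by (simp add: less_imp_le)
  ultimately show "\<forall>i<n. e \<le> capped_deg n b (Poly_Mapping.single i 1 + w)"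
    using assms(3) capped_deg_single_add[of _ n b w] by simp
qed

lemma capped_deg_single_add_ge_iff_socle:
  assumes "keys \<nu> \<subseteq> {..<n}" "0 < n" "0 < e"
  shows "(\<forall>i<n. e \<le> capped_deg n b (Poly_Mapping.single i 1 + \<nu>))
    \<longleftrightarrow> e \<le> capped_deg n b \<nu> \<or> (\<exists>w\<in>socle_monoms n b e. mdvd w \<nu>)"
proof
  assume ge: "\<forall>i<n. e \<le> capped_deg n b (Poly_Mapping.single i 1 + \<nu>)"
  show "e \<le> capped_deg n b \<nu> \<or> (\<exists>w\<in>socle_monoms n b e. mdvd w \<nu>)"
  proof (cases "e \<le> capped_deg n b \<nu>")
    case False
    then have below: "\<forall>i<n. lookup \<nu> i < b i"
      using ge lookup_less_if_capped_deg_single_add by (meson not_le less_le_trans)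
    then have "capped_deg n b \<nu> = mdeg \<nu>"
      using assms(1) capped_deg_eq_mdeg by (simp add: less_imp_le)
    moreover have "e \<le> capped_deg n b \<nu> + 1"
      using ge[rule_format, OF assms(2)] below[rule_format, OF assms(2)]
        capped_deg_single_add[OF assms(2), of b \<nu>] by simp
    ultimately have "\<nu> \<in> socle_monoms n b e"
      using assms(1) below False by (simp add: socle_monoms_def)
    then show ?thesis
      using mdvd_refl by blast
  qed simp
next
  have "e \<le> capped_deg n b (Poly_Mapping.single i 1 + \<nu>)"
    if "i < n" "w \<in> socle_monoms n b e" "mdvd w \<nu>" for i w
  proof -
    have "e \<le> capped_deg n b (Poly_Mapping.single i 1 + w)"
      using that(1,2) capped_deg_single_add_ge_iff[of w n e b] assms(3) by (simp add: socle_monoms_def)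
    also have "\<dots> \<le> capped_deg n b (Poly_Mapping.single i 1 + \<nu>)"
      using that(3) by (intro capped_deg_mono mdvd_add) simp_all
    finally show ?thesis .
  qed
  moreover have "e \<le> capped_deg n b (Poly_Mapping.single i 1 + \<nu>)" if "e \<le> capped_deg n b \<nu>" "i < n" for i
    using that capped_deg_single_add[of i n b \<nu>] by simp
  ultimately show "e \<le> capped_deg n b \<nu> \<or> (\<exists>w\<in>socle_monoms n b e. mdvd w \<nu>)
    \<Longrightarrow> \<forall>i<n. e \<le> capped_deg n b (Poly_Mapping.single i 1 + \<nu>)"
    by blast
qed

lemma colon_max_veronese:
  assumes "0 < n" "0 < e"
  shows "colon_max n (monomial_ideal n (veronese_monoms n b e))
    = (monomial_ideal n (veronese_monoms n b e \<union> socle_monoms n b e) :: 'k::field mpoly set)"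
proof (intro set_eqI)
  fix f :: "'k mpoly"
  show "f \<in> colon_max n (monomial_ideal n (veronese_monoms n b e))
    \<longleftrightarrow> f \<in> monomial_ideal n (veronese_monoms n b e \<union> socle_monoms n b e)"
  proof (cases "f \<in> polyring n")
    case True
    note keys_f = keys_polyringD[OF True]
    have "f \<in> colon_max n (monomial_ideal n (veronese_monoms n b e))
        \<longleftrightarrow> (\<forall>\<nu>\<in>keys f. \<forall>i<n. e \<le> capped_deg n b (Poly_Mapping.single i 1 + \<nu>))"
      using True keys_f keys_single_add_subset
      by (auto simp: colon_max_def var_mult_in_monomial_ideal_iff ex_veronese_mdvd_iff)
    also have "\<dots> \<longleftrightarrow> (\<forall>\<nu>\<in>keys f. e \<le> capped_deg n b \<nu> \<or> (\<exists>w\<in>socle_monoms n b e. mdvd w \<nu>))"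
      using capped_deg_single_add_ge_iff_socle[OF _ assms] keys_f by blast
    also have "\<dots> \<longleftrightarrow> f \<in> monomial_ideal n (veronese_monoms n b e \<union> socle_monoms n b e)"
      using True keys_f by (auto simp: monomial_ideal_def ex_veronese_mdvd_iff[symmetric])
    finally show ?thesis .
  qed (simp add: colon_max_def monomial_ideal_def)
qed

lemma soc_ideal_veronese:
  assumes "0 < m * d"
  shows "soc_ideal n d (veronese_ideal n a d) m
    = (monomial_ideal n (socle_monoms n (\<lambda>i. m * a i) (m * d)) :: 'k::field mpoly set)"
proof -
  have "(\<forall>i<n. var i * monom w \<in> (ideal_pow n (veronese_ideal n a d) m :: 'k mpoly set))
      \<longleftrightarrow> (\<forall>i<n. lookup w i < m * a i)"
    if w: "keys w \<subseteq> {..<n}" "mdeg w = m * d - 1" for w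
  proof -
    have "(var i * monom w :: 'k mpoly) = monom (Poly_Mapping.single i 1 + w)" for i
      by (simp add: var_def monom_def mult_single)
    then have "(\<forall>i<n. var i * monom w \<in> (ideal_pow n (veronese_ideal n a d) m :: 'k mpoly set))
        \<longleftrightarrow> (\<forall>i<n. m * d \<le> capped_deg n (\<lambda>i. m * a i) (Poly_Mapping.single i 1 + w))"
      using w(1) keys_single_add_subset
      by (simp add: ideal_pow_veronese monom_in_monomial_ideal_iff ex_veronese_mdvd_iff)
    then show ?thesis
      using capped_deg_single_add_ge_iff[OF w assms] by simp
  qed
  then have generators: "{monom w | w. keys w \<subseteq> {..<n} \<and> mdeg w = m * d - 1
        \<and> (\<forall>i<n. var i * monom w \<in> (ideal_pow n (veronese_ideal n a d) m :: 'k mpoly set))}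
      = monom ` socle_monoms n (\<lambda>i. m * a i) (m * d)"
    by (auto simp: socle_monoms_def)
  show ?thesis
    unfolding soc_ideal_def generators by (rule ideal_gen_monom_image[OF socle_monoms_subset])
qed

lemma ex_socle_monom_supported_iff:
  assumes "A \<subseteq> {..<n}" "\<forall>i<n. 0 < b i"
  shows "(\<exists>w\<in>socle_monoms n b e. keys w \<subseteq> A) \<longleftrightarrow> e - 1 \<le> (\<Sum>i\<in>A. b i - 1)"
proof
  assume "\<exists>w\<in>socle_monoms n b e. keys w \<subseteq> A"
  then obtain w where w: "w \<in> socle_monoms n b e" "keys w \<subseteq> A"
    by blast
  then have "e - 1 = sum (lookup w) A"
    using finite_subset[OF assms(1)] by (simp add: socle_monoms_def mdeg_eq_sum_superset)
  also have "\<dots> \<le> (\<Sum>i\<in>A. b i - 1)"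
    using w(1) assms(1) by (intro sum_mono) (auto simp: socle_monoms_def less_Suc_eq_le[symmetric])
  finally show "e - 1 \<le> (\<Sum>i\<in>A. b i - 1)" .
next
  assume "e - 1 \<le> (\<Sum>i\<in>A. b i - 1)"
  then obtain y where y: "\<forall>i\<in>A. y i \<le> b i - 1" "sum y A = e - 1"
    using ex_bounded_summands[of A "\<lambda>_. 0" "\<lambda>i. b i - 1" "e - 1"] finite_subset[OF assms(1)] by auto
  define w where "w = expvec n (\<lambda>i. if i \<in> A then y i else 0)"
  have "keys w \<subseteq> A"
    by (auto simp: w_def in_keys_iff lookup_expvec split: if_splits)
  moreover have "mdeg w = e - 1"
    using y(2) assms(1) by (simp add: w_def mdeg_expvec sum.If_cases Int_absorb1)
  moreover have "\<forall>i<n. lookup w i < b i"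
    using y(1) assms(2) by (auto simp: w_def lookup_expvec less_Suc_eq_le[symmetric])
  ultimately show "\<exists>w\<in>socle_monoms n b e. keys w \<subseteq> A"
    using assms(1) by (auto simp: socle_monoms_def)
qed

lemma sum_mult_minus_one_ge_iff:
  fixes a :: "'a \<Rightarrow> nat"
  assumes "finite A" "\<forall>i\<in>A. 0 < a i" "0 < k" "0 < d" "d < sum a A"
  shows "k * d - 1 \<le> (\<Sum>i\<in>A. k * a i - 1) \<longleftrightarrow> card A - 1 \<le> k * (sum a A - d)"
proof -
  have "(\<Sum>i\<in>A. k * a i - 1) + card A = (\<Sum>i\<in>A. k * a i - 1 + 1)"
    by (simp only: sum.distrib card_eq_sum)
  also have "\<dots> = k * sum a A"
    using assms(2,3) by (simp add: sum_distrib_left)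
  finally have "(\<Sum>i\<in>A. k * a i - 1) + card A = k * d + k * (sum a A - d)"
    using assms(5) by (simp add: add_mult_distrib2[symmetric])
  moreover have "0 < card A"
    using assms(1,5) card_gt_0_iff by fastforce
  moreover have "0 < k * d"
    using assms(3,4) by simp
  ultimately show ?thesis
    by linarith
qed

lemma socle_monoms_eq_empty_iff:
  assumes "\<forall>i<n. 0 < a i" "0 < d" "d < (\<Sum>i<n. a i)" "0 < m"
  shows "socle_monoms n (\<lambda>i. m * a i) (m * d) = {} \<longleftrightarrow> \<not> n - 1 \<le> m * ((\<Sum>i<n. a i) - d)"
  using ex_socle_monom_supported_iff[of "{..<n}" n "\<lambda>i. m * a i" "m * d"]
    sum_mult_minus_one_ge_iff[of "{..<n}" a m d] assms
  by (auto simp: socle_monoms_def)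

definition socle_nonzero :: "nat \<Rightarrow> (nat \<Rightarrow> nat) \<Rightarrow> nat \<Rightarrow> nat \<Rightarrow> bool" where
  "socle_nonzero n a d m \<longleftrightarrow> 0 < m \<and> n - 1 \<le> m * ((\<Sum>i<n. a i) - d)"

lemma socle_nonzero_self:
  assumes "d < (\<Sum>i<n. a i)"
  shows "socle_nonzero n a d n"
proof -
  have "0 < n"
    using assms by (auto intro: gr0I)
  moreover have "n - 1 \<le> n * ((\<Sum>i<n. a i) - d)"
    using mult_le_mono2[of 1 "(\<Sum>i<n. a i) - d" n] assms by arith
  ultimately show ?thesis
    by (simp add: socle_nonzero_def)
qed

lemma Least_socle_nonzero_pos: "d < (\<Sum>i<n. a i) \<Longrightarrow> 0 < (LEAST m. socle_nonzero n a d m)"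
  using LeastI[of "socle_nonzero n a d", OF socle_nonzero_self] by (simp add: socle_nonzero_def)

lemma colon_subset_ideal_pow_iff:
  assumes "\<forall>i<n. 0 < a i" "0 < d" "d < (\<Sum>i<n. a i)"
  shows "colon_max n (ideal_pow n (veronese_ideal n a d) m)
      \<subseteq> (ideal_pow n (veronese_ideal n a d) m :: 'k::field mpoly set)
    \<longleftrightarrow> \<not> socle_nonzero n a d m"
proof (cases "m = 0")
  case False
  let ?V = "veronese_monoms n (\<lambda>i. m * a i) (m * d)"
  let ?S = "socle_monoms n (\<lambda>i. m * a i) (m * d)"
  have "0 < n" "0 < m * d"
    using assms False by (auto intro: gr0I)
  then have "colon_max n (ideal_pow n (veronese_ideal n a d) m)
      \<subseteq> (ideal_pow n (veronese_ideal n a d) m :: 'k::field mpoly set)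
    \<longleftrightarrow> (\<forall>\<mu>\<in>?V \<union> ?S. \<exists>\<nu>\<in>?V. mdvd \<nu> \<mu>)"
    using veronese_monoms_subset socle_monoms_subset
    by (simp add: ideal_pow_veronese colon_max_veronese monomial_ideal_subset_iff)
  also have "\<dots> \<longleftrightarrow> ?S = {}"
  proof
    assume cover: "\<forall>\<mu>\<in>?V \<union> ?S. \<exists>\<nu>\<in>?V. mdvd \<nu> \<mu>"
    show "?S = {}"
    proof (rule ccontr)
      assume "?S \<noteq> {}"
      then obtain w where w: "w \<in> ?S"
        by blast
      then obtain \<nu> where \<nu>: "\<nu> \<in> ?V" "mdvd \<nu> w"
        using cover by blast
      have "mdeg w < mdeg \<nu>"
        using w \<nu>(1) \<open>0 < m * d\<close> by (simp add: socle_monoms_def veronese_monoms_def)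
      then show False
        using \<nu>(2) not_mdvd_if_mdeg_less by blast
    qed
  qed (blast intro: mdvd_refl)
  finally show ?thesis
    using socle_monoms_eq_empty_iff[OF assms] False by (simp add: socle_nonzero_def)
qed (simp add: colon_max_def socle_nonzero_def)

lemma soc_ideal_eq_zero_iff:
  assumes "\<forall>i<n. 0 < a i" "0 < d" "d < (\<Sum>i<n. a i)" "0 < m"
  shows "soc_ideal n d (veronese_ideal n a d) m = ({0} :: 'k::field mpoly set)
    \<longleftrightarrow> \<not> socle_nonzero n a d m"
  using assms socle_monoms_eq_empty_iff[OF assms]
  by (simp add: soc_ideal_veronese monomial_ideal_eq_zero_iff socle_monoms_subset socle_nonzero_def)

section \<open>Splitting socle monomials\<close>

definition socle_condition :: "nat \<Rightarrow> (nat \<Rightarrow> nat) \<Rightarrow> nat \<Rightarrow> nat \<Rightarrow> bool" where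
  "socle_condition n a d k \<longleftrightarrow> (\<forall>A\<subseteq>{..<n}. d < sum a A \<longrightarrow> card A - 1 \<le> k * (sum a A - d))"

definition socle_splits :: "nat \<Rightarrow> (nat \<Rightarrow> nat) \<Rightarrow> nat \<Rightarrow> nat \<Rightarrow> nat \<Rightarrow> bool" where
  "socle_splits n a d k m \<longleftrightarrow>
    (\<forall>w\<in>socle_monoms n (\<lambda>i. m * a i) (m * d).
      \<exists>\<mu>\<in>veronese_monoms n (\<lambda>i. (m - k) * a i) ((m - k) * d).
      \<exists>\<nu>\<in>socle_monoms n (\<lambda>i. k * a i) (k * d). mdvd (\<mu> + \<nu>) w)"

lemma socle_monom_excess_sum:
  assumes w: "w \<in> socle_monoms n (\<lambda>i. m * a i) (m * d)" and "k \<le> m" "0 < k * d"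
  shows "(\<Sum>i<n. lookup w i - (m - k) * a i) \<le> k * d - 1"
proof -
  have "m * (\<Sum>i<n. lookup w i - (m - k) * a i) \<le> (\<Sum>i<n. k * lookup w i)"
    unfolding sum_distrib_left
  proof (intro sum_mono)
    fix i assume "i \<in> {..<n}"
    then have "lookup w i \<le> ((m - k) + k) * a i"
      using w assms(2) by (simp add: socle_monoms_def less_imp_le)
    then show "m * (lookup w i - (m - k) * a i) \<le> k * lookup w i"
      using mult_diff_mult_le[of "lookup w i" "m - k" k "a i"] assms(2) by simp
  qed
  also have "\<dots> = k * (m * d - 1)"
    using w mdeg_eq_sum[of w n] by (simp add: socle_monoms_def sum_distrib_left[symmetric])
  also have "\<dots> < m * (k * d)"
    using assms(2,3) by (simp add: diff_mult_distrib2 mult.left_commute)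
  finally show ?thesis
    by simp arith
qed

lemma socle_monom_capped_sum:
  assumes apos: "\<forall>i<n. 0 < a i" and "0 < k" "k \<le> m" "0 < d"
    and cond: "socle_condition n a d k"
    and w: "w \<in> socle_monoms n (\<lambda>i. m * a i) (m * d)"
  shows "k * d - 1 \<le> (\<Sum>i<n. min (lookup w i) (k * a i - 1))"
proof -
  have split_m: "m * x = (m - k) * x + k * x" for x
    using assms(3) by (simp add: add_mult_distrib[symmetric])
  define B where "B = {i\<in>{..<n}. k * a i - 1 \<le> lookup w i}"
  have B: "B \<subseteq> {..<n}" "finite B"
    by (auto simp: B_def)
  have "(\<Sum>i<n. min (lookup w i) (k * a i - 1))
      = (\<Sum>i\<in>B. min (lookup w i) (k * a i - 1)) + (\<Sum>i\<in>{..<n} - B. min (lookup w i) (k * a i - 1))"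
    using sum.subset_diff[OF B(1)] by (simp add: add.commute)
  also have "\<dots> = (\<Sum>i\<in>B. k * a i - 1) + (\<Sum>i\<in>{..<n} - B. lookup w i)"
    by (auto simp: B_def intro!: sum.cong arg_cong2[where f = "(+)"])
  finally have capped: "(\<Sum>i<n. min (lookup w i) (k * a i - 1))
      = (\<Sum>i\<in>B. k * a i - 1) + (\<Sum>i\<in>{..<n} - B. lookup w i)" .
  show ?thesis
  proof (cases "d < sum a B")
    case True
    then have "k * d - 1 \<le> (\<Sum>i\<in>B. k * a i - 1)"
      using cond B sum_mult_minus_one_ge_iff[of B a k d] apos assms(2,4)
      by (auto simp: socle_condition_def)
    then show ?thesis
      using capped by simp
  next
    case False
    have "(\<Sum>i\<in>B. lookup w i) \<le> (\<Sum>i\<in>B. k * a i - 1 + (m - k) * a i)"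
      using w B(1) split_m by (intro sum_mono) (fastforce simp: socle_monoms_def)
    also have "\<dots> \<le> (\<Sum>i\<in>B. k * a i - 1) + (m - k) * d"
      using False by (simp add: sum.distrib sum_distrib_left[symmetric])
    finally have "(\<Sum>i\<in>B. lookup w i) \<le> (\<Sum>i\<in>B. k * a i - 1) + (m - k) * d" .
    moreover have "m * d - 1 = (\<Sum>i\<in>B. lookup w i) + (\<Sum>i\<in>{..<n} - B. lookup w i)"
      using w sum.subset_diff[OF B(1), of "lookup w"] mdeg_eq_sum[of w n]
      by (simp add: socle_monoms_def add.commute)
    ultimately show ?thesis
      using capped split_m[of d] assms(2,4) by simp
  qed
qed

lemma socle_monom_split:
  assumes apos: "\<forall>i<n. 0 < a i" and "0 < k" "k \<le> m" "0 < d"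
    and cond: "socle_condition n a d k"
    and w: "w \<in> socle_monoms n (\<lambda>i. m * a i) (m * d)"
  shows "\<exists>\<mu>\<in>veronese_monoms n (\<lambda>i. (m - k) * a i) ((m - k) * d).
    \<exists>\<nu>\<in>socle_monoms n (\<lambda>i. k * a i) (k * d). \<mu> + \<nu> = w"
proof -
  have split_m: "m * x = (m - k) * x + k * x" for x
    using assms(3) by (simp add: add_mult_distrib[symmetric])
  have keys_w: "keys w \<subseteq> {..<n}" and below: "\<forall>i<n. lookup w i < m * a i"
    using w by (auto simp: socle_monoms_def)
  define l where "l i = lookup w i - (m - k) * a i" for i
  define u where "u i = min (lookup w i) (k * a i - 1)" for i
  have "\<forall>i<n. l i \<le> u i \<and> u i \<le> lookup w i"
    using below split_m by (fastforce simp: l_def u_def)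
  moreover have "sum l {..<n} \<le> k * d - 1"
    unfolding l_def using socle_monom_excess_sum[OF w] assms(2,3,4) by simp
  moreover have "k * d - 1 \<le> sum u {..<n}"
    unfolding u_def by (rule socle_monom_capped_sum[OF assms])
  ultimately obtain \<nu> where \<nu>: "mdvd \<nu> w" "keys \<nu> \<subseteq> {..<n}" "mdeg \<nu> = k * d - 1"
    "\<forall>i<n. l i \<le> lookup \<nu> i \<and> lookup \<nu> i \<le> u i"
    using ex_mdvd_between[OF keys_w] by blast
  have "w = (w - \<nu>) + \<nu>"
    using \<nu>(1) by (simp add: mdvd_diff_add)
  moreover have "\<nu> \<in> socle_monoms n (\<lambda>i. k * a i) (k * d)"
  proof -
    have "lookup \<nu> i < k * a i" if "i < n" for i
    proof -
      have "lookup \<nu> i \<le> k * a i - 1" "0 < k * a i"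
        using \<nu>(4) apos assms(2) that by (auto simp: u_def)
      then show ?thesis
        by linarith
    qed
    then show ?thesis
      using \<nu>(2,3) by (simp add: socle_monoms_def)
  qed
  moreover have "w - \<nu> \<in> veronese_monoms n (\<lambda>i. (m - k) * a i) ((m - k) * d)"
  proof -
    have "mdeg (w - \<nu>) = (m - k) * d"
      using w \<nu>(1,3) split_m[of d] assms(2,4) by (simp add: mdeg_diff socle_monoms_def)
    moreover have "\<forall>i<n. lookup (w - \<nu>) i \<le> (m - k) * a i"
      using \<nu>(4) by (auto simp: lookup_minus l_def)
    ultimately show ?thesis
      using keys_w keys_diff_subset[of w \<nu>] by (auto simp: veronese_monoms_def)
  qed
  ultimately show ?thesis
    by metis
qed

lemma not_socle_splits:
  assumes apos: "\<forall>i<n. 0 < a i" and "0 < d" "0 < k"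
    and A: "A \<subseteq> {..<n}" "d < sum a A" "\<not> card A - 1 \<le> k * (sum a A - d)"
  shows "\<not> socle_splits n a d k (k + card A)"
proof
  have supported_iff: "(\<exists>w\<in>socle_monoms n (\<lambda>i. j * a i) (j * d). keys w \<subseteq> A)
      \<longleftrightarrow> card A - 1 \<le> j * (sum a A - d)" if "0 < j" for j
    using ex_socle_monom_supported_iff[OF A(1), of "\<lambda>i. j * a i" "j * d"]
      sum_mult_minus_one_ge_iff[of A a j d] A(1,2) apos assms(2) that finite_subset[OF A(1)]
    by auto
  have "card A - 1 \<le> (k + card A) * 1"
    by simp
  also have "\<dots> \<le> (k + card A) * (sum a A - d)"
    using A(2) by (intro mult_le_mono2) simp
  finally obtain w where w: "w \<in> socle_monoms n (\<lambda>i. (k + card A) * a i) ((k + card A) * d)" "keys w \<subseteq> A"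
    using supported_iff[of "k + card A"] assms(3) by auto
  assume "socle_splits n a d k (k + card A)"
  then obtain \<mu> \<nu> where \<nu>: "\<nu> \<in> socle_monoms n (\<lambda>i. k * a i) (k * d)" "mdvd (\<mu> + \<nu>) w"
    using w(1) by (auto simp: socle_splits_def)
  have "mdvd \<nu> (\<mu> + \<nu>)"
    by (simp add: mdvd_add_left)
  then have "keys \<nu> \<subseteq> A"
    using \<nu>(2) w(2) keys_subset_if_mdvd mdvd_trans by blast
  then show False
    using supported_iff[OF assms(3)] A(3) \<nu>(1) by blast
qed

lemma socle_splits_iff_socle_condition:
  assumes "\<forall>i<n. 0 < a i" "0 < d" "0 < k"
  shows "(\<forall>m\<ge>k. socle_splits n a d k m) \<longleftrightarrow> socle_condition n a d k"
proof
  assume "\<forall>m\<ge>k. socle_splits n a d k m"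
  then show "socle_condition n a d k"
    using not_socle_splits[OF assms] unfolding socle_condition_def by (meson le_add1)
next
  assume "socle_condition n a d k"
  then show "\<forall>m\<ge>k. socle_splits n a d k m"
    using socle_monom_split[OF assms(1,3) _ assms(2)] unfolding socle_splits_def by (metis mdvd_refl)
qed

section \<open>Equi-generation\<close>

lemma ex_mdvd_socle_monom_iff:
  assumes w: "w \<in> socle_monoms n (\<lambda>i. m * a i) (m * d)" and "k \<le> m" "0 < k * d"
  shows "(\<exists>\<kappa>\<in>{\<mu> + \<nu> | \<mu> \<nu>. \<mu> \<in> veronese_monoms n (\<lambda>i. (m - k) * a i) ((m - k) * d)
              \<and> \<nu> \<in> veronese_monoms n (\<lambda>i. k * a i) (k * d) \<union> socle_monoms n (\<lambda>i. k * a i) (k * d)}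
            \<union> veronese_monoms n (\<lambda>i. m * a i) (m * d). mdvd \<kappa> w)
    \<longleftrightarrow> (\<exists>\<mu>\<in>veronese_monoms n (\<lambda>i. (m - k) * a i) ((m - k) * d).
          \<exists>\<nu>\<in>socle_monoms n (\<lambda>i. k * a i) (k * d). mdvd (\<mu> + \<nu>) w)"
    (is "(\<exists>\<kappa>\<in>?W \<union> ?V m. _) \<longleftrightarrow> _")
proof
  have md: "m * d = (m - k) * d + k * d"
    using assms(2) by (simp add: add_mult_distrib[symmetric])
  then have deg_w: "mdeg w < m * d"
    using w assms(3) by (simp add: socle_monoms_def)
  assume "\<exists>\<kappa>\<in>?W \<union> ?V m. mdvd \<kappa> w"
  then obtain \<kappa> where \<kappa>: "\<kappa> \<in> ?W \<union> ?V m" "mdvd \<kappa> w"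
    by blast
  then have "\<kappa> \<notin> ?V m"
    using deg_w not_mdvd_if_mdeg_less by (auto simp: veronese_monoms_def)
  then obtain \<mu> \<nu> where \<mu>\<nu>: "\<kappa> = \<mu> + \<nu>" "\<mu> \<in> veronese_monoms n (\<lambda>i. (m - k) * a i) ((m - k) * d)"
    "\<nu> \<in> veronese_monoms n (\<lambda>i. k * a i) (k * d) \<union> socle_monoms n (\<lambda>i. k * a i) (k * d)"
    using \<kappa>(1) by blast
  moreover have "\<nu> \<notin> veronese_monoms n (\<lambda>i. k * a i) (k * d)"
  proof
    assume "\<nu> \<in> veronese_monoms n (\<lambda>i. k * a i) (k * d)"
    then have "mdeg \<kappa> = m * d"
      using \<mu>\<nu>(1,2) md by (simp add: veronese_monoms_def mdeg_add)
    then show False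
      using deg_w \<kappa>(2) not_mdvd_if_mdeg_less by simp
  qed
  ultimately show "\<exists>\<mu>\<in>veronese_monoms n (\<lambda>i. (m - k) * a i) ((m - k) * d).
      \<exists>\<nu>\<in>socle_monoms n (\<lambda>i. k * a i) (k * d). mdvd (\<mu> + \<nu>) w"
    using \<kappa>(2) by blast
qed blast

lemma soc_ideal_subset_iff_socle_splits:
  assumes "0 < d" "0 < k" "k \<le> m"
  shows "soc_ideal n d (veronese_ideal n a d) m
      \<subseteq> ideal_prod n (ideal_pow n (veronese_ideal n a d) (m - k))
          (soc_ideal n d (veronese_ideal n a d) k :: 'k::field mpoly set)
    \<longleftrightarrow> socle_splits n a d k m"
proof -
  have "0 < m * d" "0 < k * d"
    using assms by simp_all
  then show ?thesis
    by (simp add: soc_ideal_veronese ideal_pow_veronese ideal_prod_monomial_ideal veronese_monoms_subset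
        socle_monoms_subset monomial_ideal_subset_iff socle_splits_def) blast
qed

lemma colon_subset_iff_socle_splits:
  assumes "0 < n" "0 < d" "0 < k" "k \<le> m"
  shows "colon_max n (ideal_pow n (veronese_ideal n a d) m)
      \<subseteq> {f + g | f g. f \<in> ideal_prod n (ideal_pow n (veronese_ideal n a d) (m - k))
                            (colon_max n (ideal_pow n (veronese_ideal n a d) k))
                    \<and> g \<in> (ideal_pow n (veronese_ideal n a d) m :: 'k::field mpoly set)}
    \<longleftrightarrow> socle_splits n a d k m"
proof -
  let ?V = "\<lambda>j. veronese_monoms n (\<lambda>i. j * a i) (j * d)"
  let ?S = "\<lambda>j. socle_monoms n (\<lambda>i. j * a i) (j * d)"
  let ?W = "{\<mu> + \<nu> | \<mu> \<nu>. \<mu> \<in> ?V (m - k) \<and> \<nu> \<in> ?V k \<union> ?S k}"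
  have md: "0 < m * d" "0 < k * d"
    using assms by simp_all
  have "?V k \<union> ?S k \<subseteq> {\<mu>. keys \<mu> \<subseteq> {..<n}}"
    using veronese_monoms_subset socle_monoms_subset by blast
  then have "ideal_prod n (ideal_pow n (veronese_ideal n a d) (m - k))
      (colon_max n (ideal_pow n (veronese_ideal n a d) k)) = (monomial_ideal n ?W :: 'k mpoly set)"
    unfolding ideal_pow_veronese colon_max_veronese[OF assms(1) md(2)]
    by (rule ideal_prod_monomial_ideal[OF veronese_monoms_subset])
  then have "colon_max n (ideal_pow n (veronese_ideal n a d) m)
      \<subseteq> {f + g | f g. f \<in> ideal_prod n (ideal_pow n (veronese_ideal n a d) (m - k))
                            (colon_max n (ideal_pow n (veronese_ideal n a d) k))
                    \<and> g \<in> (ideal_pow n (veronese_ideal n a d) m :: 'k::field mpoly set)}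
    \<longleftrightarrow> monomial_ideal n (?V m \<union> ?S m) \<subseteq> (monomial_ideal n (?W \<union> ?V m) :: 'k mpoly set)"
    unfolding ideal_pow_veronese colon_max_veronese[OF assms(1) md(1)] monomial_ideal_Un by simp
  also have "\<dots> \<longleftrightarrow> (\<forall>\<mu>\<in>?V m \<union> ?S m. \<exists>\<kappa>\<in>?W \<union> ?V m. mdvd \<kappa> \<mu>)"
    by (rule monomial_ideal_subset_iff) (use veronese_monoms_subset socle_monoms_subset in blast)
  also have "\<dots> \<longleftrightarrow> (\<forall>w\<in>?S m. \<exists>\<kappa>\<in>?W \<union> ?V m. mdvd \<kappa> w)"
    using mdvd_refl by blast
  also have "\<dots> \<longleftrightarrow> socle_splits n a d k m"
    unfolding socle_splits_def using ex_mdvd_socle_monom_iff[OF _ assms(4) md(2)] by (rule ball_cong[OF refl])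
  finally show ?thesis .
qed

lemma all_least_iff:
  fixes Z :: "nat \<Rightarrow> bool"
  assumes "\<not> Z k"
  shows "(\<forall>m. \<not> Z m \<and> (\<forall>i<m. Z i) \<longrightarrow> R m) \<longleftrightarrow> R (LEAST m. \<not> Z m)"
proof -
  have "\<not> Z m \<and> (\<forall>i<m. Z i) \<longleftrightarrow> m = (LEAST m. \<not> Z m)" for m
    using assms by (metis LeastI Least_le not_less_Least le_antisym not_le)
  then show ?thesis
    by auto
qed

lemma all_least_pos_iff:
  fixes Z :: "nat \<Rightarrow> bool"
  assumes "0 < k" "\<not> Z k"
  shows "(\<forall>m\<ge>1. \<not> Z m \<and> (\<forall>i. 1 \<le> i \<and> i < m \<longrightarrow> Z i) \<longrightarrow> R m)
    \<longleftrightarrow> R (LEAST m. 0 < m \<and> \<not> Z m)"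
  using all_least_iff[of "\<lambda>m. m = 0 \<or> Z m" k R] assms by (auto simp: Suc_le_eq)

lemma Soc_equigen_veronese_iff:
  assumes "\<forall>i<n. 0 < a i" "0 < d" "d < (\<Sum>i<n. a i)"
  shows "Soc_equigen n (veronese_ideal n a d :: 'k::field mpoly set)
    \<longleftrightarrow> socle_condition n a d (LEAST m. socle_nonzero n a d m)"
proof -
  let ?I = "veronese_ideal n a d :: 'k mpoly set"
  let ?k = "LEAST m. socle_nonzero n a d m"
  have nonzero: "(\<lambda>m. \<not> colon_max n (ideal_pow n ?I m) \<subseteq> ideal_pow n ?I m) = socle_nonzero n a d"
    by (simp add: fun_eq_iff colon_subset_ideal_pow_iff[OF assms])
  have "0 < n"
    using assms(3) by (auto intro: gr0I)
  have "Soc_equigen n ?I \<longleftrightarrow> (\<forall>m\<ge>?k. colon_max n (ideal_pow n ?I m) \<subseteq>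
      {f + g | f g. f \<in> ideal_prod n (ideal_pow n ?I (m - ?k)) (colon_max n (ideal_pow n ?I ?k))
                  \<and> g \<in> ideal_pow n ?I m})"
    unfolding Soc_equigen_def using socle_nonzero_self[OF assms(3)] fun_cong[OF nonzero, of n]
    by (subst all_least_iff[where k = n]) (simp_all add: nonzero)
  also have "\<dots> \<longleftrightarrow> (\<forall>m\<ge>?k. socle_splits n a d ?k m)"
    using Least_socle_nonzero_pos[OF assms(3)]
    by (intro iff_allI imp_cong refl) (rule colon_subset_iff_socle_splits[OF \<open>0 < n\<close> assms(2)])
  also have "\<dots> \<longleftrightarrow> socle_condition n a d ?k"
    using Least_socle_nonzero_pos[OF assms(3)] by (rule socle_splits_iff_socle_condition[OF assms(1,2)])
  finally show ?thesis .
qed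

lemma SocStar_equigen_veronese_iff:
  assumes "\<forall>i<n. 0 < a i" "0 < d" "d < (\<Sum>i<n. a i)"
  shows "SocStar_equigen n d (veronese_ideal n a d :: 'k::field mpoly set)
    \<longleftrightarrow> socle_condition n a d (LEAST m. socle_nonzero n a d m)"
proof -
  let ?I = "veronese_ideal n a d :: 'k mpoly set"
  let ?k = "LEAST m. socle_nonzero n a d m"
  have nonzero: "(\<lambda>m. 0 < m \<and> soc_ideal n d ?I m \<noteq> {0}) = socle_nonzero n a d"
  proof
    fix m
    show "(0 < m \<and> soc_ideal n d ?I m \<noteq> {0}) \<longleftrightarrow> socle_nonzero n a d m"
      using soc_ideal_eq_zero_iff[OF assms, of m, where 'k='k] by (cases "0 < m") (auto simp: socle_nonzero_def)
  qed
  have "0 < n"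
    using assms(3) by (auto intro: gr0I)
  have "SocStar_equigen n d ?I
      \<longleftrightarrow> (\<forall>m\<ge>?k. soc_ideal n d ?I m \<subseteq> ideal_prod n (ideal_pow n ?I (m - ?k)) (soc_ideal n d ?I ?k))"
    unfolding SocStar_equigen_def
    using socle_nonzero_self[OF assms(3)] fun_cong[OF nonzero, of n] \<open>0 < n\<close>
    by (subst all_least_pos_iff[where k = n]) (simp_all add: nonzero)
  also have "\<dots> \<longleftrightarrow> (\<forall>m\<ge>?k. socle_splits n a d ?k m)"
    using Least_socle_nonzero_pos[OF assms(3)]
    by (intro iff_allI imp_cong refl) (rule soc_ideal_subset_iff_socle_splits[OF assms(2)])
  also have "\<dots> \<longleftrightarrow> socle_condition n a d ?k"
    using Least_socle_nonzero_pos[OF assms(3)] by (rule socle_splits_iff_socle_condition[OF assms(1,2)])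
  finally show ?thesis .
qed

theorem proposition3p8:
  fixes n d :: nat and a :: "nat \<Rightarrow> nat" and k0 :: nat
  assumes apos: "\<forall>i<n. 0 < a i"
    and dpos: "0 < d"
    and big: "(\<Sum>i<n. a i) > d"
    and k0_def: "k0 = (LEAST k. 0 < k \<and> k * ((\<Sum>i<n. a i) - d) \<ge> n - 1)"
  shows "(Soc_equigen n (veronese_ideal n a d :: 'k::field mpoly set)
            \<longleftrightarrow> SocStar_equigen n d (veronese_ideal n a d :: 'k mpoly set))
       \<and> (SocStar_equigen n d (veronese_ideal n a d :: 'k mpoly set)
            \<longleftrightarrow> (\<forall>A \<subseteq> {..<n}. sum a A > d \<longrightarrow> k0 * (sum a A - d) \<ge> card A - 1))"
proof -
  have "k0 = (LEAST m. socle_nonzero n a d m)"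
    unfolding k0_def socle_nonzero_def ..
  then show ?thesis
    using Soc_equigen_veronese_iff[OF apos dpos big, where 'k='k]
      SocStar_equigen_veronese_iff[OF apos dpos big, where 'k='k]
    by (simp add: socle_condition_def)
qed

end
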